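(* Let $K\ge1$ and let $w_1,w_2,\dots$ be vectors in the probability simplex $\mathcal P_K=\{w\in[0,1]^K:\sum_kw^k=1\}$, with the first $K$ of them satisfying $\sum_{s=1}^Kw_s^k=1$ for every $k\in[K]$ (the burn-in rounds, in which each arm is played exactly once, so $n_K^k=1$ for all $k$). For $t>K$, suppose the arm played at round $t$ is \[ k_t=\mathrm{argmin}_{k\in[K]}\frac{n_{t-1}^k}{\sum_{s=1}^tw_s^k}, \] where $n_t^k$ denotes the number of times arm $k$ has been played up to and including round $t$ (so $n_t^{k_t}=n_{t-1}^{k_t}+1$ and $n_t^k=n_{t-1}^k$ for $k\ne k_t$). Then for all $t\ge K$ and all $k\in[K]$, \[ \sum_{s=1}^tw_s^k-(K-1)\le n_t^k\le\sum_{s=1}^tw_s^k+1. \]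
   Context: This is the tracking rule used within each phase of an arm-sampling algorithm: at each round a sampling distribution $w_t$ over the $K$ arms is produced, and the played arm is chosen by the displayed argmin rule (ties broken arbitrarily). *)

theory Defs
  imports Complex_Main
begin

text \<open>Arms are 0,...,K-1, rounds are 1,2,...; play t is the arm played at round t.
  plays play t k = number of rounds s in {1..t} with play s = k  (n_t^k).
  cumw w t k = sum of w_s^k for s = 1..t.\<close>

definition plays :: "(nat \<Rightarrow> nat) \<Rightarrow> nat \<Rightarrow> nat \<Rightarrow> nat" where
  "plays play t k = card {s \<in> {1..t}. play s = k}"

definition cumw :: "(nat \<Rightarrow> nat \<Rightarrow> real) \<Rightarrow> nat \<Rightarrow> nat \<Rightarrow> real" where
  "cumw w t k = (\<Sum>s=1..t. w s k)"

end

theory Submission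
  imports Defs
begin

text \<open>Write \<open>W\<^sub>t\<^sup>k\<close> for the cumulative weight of arm \<open>k\<close>. If every arm satisfies
  \<open>n\<^sub>t\<^sup>k \<le> W\<^sub>t\<^sup>k + 1\<close>, the lower bound follows because both \<open>n\<^sub>t\<close> and \<open>W\<^sub>t\<close> sum to \<open>t\<close>
  over the arms. The upper bound is proved by induction on \<open>t\<close>: only the arm \<open>p\<close> played at
  round \<open>t\<close> gains a play, and since \<open>p\<close> minimises \<open>n\<^sub>t\<^sub>-\<^sub>1\<^sup>k / W\<^sub>t\<^sup>k\<close>, comparing it with
  the ratio of the sums gives \<open>n\<^sub>t\<^sub>-\<^sub>1\<^sup>p / W\<^sub>t\<^sup>p \<le> (t - 1) / t \<le> 1\<close>.\<close>

lemma plays_Suc: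
  "real (plays play (Suc t) k) = real (plays play t k) + (if play (Suc t) = k then 1 else 0)"
proof -
  have "{s \<in> {1..Suc t}. play s = k} =
      {s \<in> {1..t}. play s = k} \<union> (if play (Suc t) = k then {Suc t} else {})"
    by (auto simp: le_Suc_eq)
  then show ?thesis
    unfolding plays_def by simp
qed

lemma cumw_Suc: "cumw w (Suc t) k = cumw w t k + w (Suc t) k"
  unfolding cumw_def by simp

lemma cumw_mono:
  assumes "t \<le> t'" and "\<And>s. t < s \<Longrightarrow> 0 \<le> w s k"
  shows "cumw w t k \<le> cumw w t' k"
  using assms(1)
proof (induction t' rule: dec_induct)
  case (step n)
  then show ?case
    using assms(2)[of "Suc n"] by (simp add: cumw_Suc)
qed simp

lemma sum_plays:
  assumes "\<And>s. s \<in> {1..t} \<Longrightarrow> play s < K"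
  shows "(\<Sum>k<K. real (plays play t k)) = real t"
proof -
  have "(\<Sum>k<K. real (plays play t k)) = (\<Sum>k<K. \<Sum>s=1..t. if play s = k then 1 else 0)"
    unfolding plays_def by (simp add: sum.If_cases Int_def conj_commute)
  also have "\<dots> = (\<Sum>s=1..t. \<Sum>k<K. if play s = k then 1 else 0)"
    by (rule sum.swap)
  also have "\<dots> = (\<Sum>s=1..t. 1)"
    using assms by (intro sum.cong) auto
  finally show ?thesis
    by simp
qed

lemma sum_cumw:
  assumes "\<And>s. s \<in> {1..t} \<Longrightarrow> (\<Sum>k<K. w s k) = 1"
  shows "(\<Sum>k<K. cumw w t k) = real t"
proof -
  have "(\<Sum>k<K. cumw w t k) = (\<Sum>s=1..t. \<Sum>k<K. w s k)"
    unfolding cumw_def by (rule sum.swap)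
  also have "\<dots> = (\<Sum>s=1..t. 1)"
    using assms by (intro sum.cong) auto
  finally show ?thesis
    by simp
qed

lemma plays_eq_1_if_bij_betw:
  assumes "bij_betw play {1..K} {..<K}" and "k < K"
  shows "plays play K k = 1"
proof -
  have "k \<in> play ` {1..K}"
    using bij_betw_imp_surj_on[OF assms(1)] assms(2) by blast
  then obtain s where s: "s \<in> {1..K}" "play s = k"
    by blast
  have "{s' \<in> {1..K}. play s' = k} = {s}"
    using s bij_betw_imp_inj_on[OF assms(1)] by (auto dest: inj_onD)
  then show ?thesis
    unfolding plays_def by simp
qed

lemma argmin_ratio_le:
  fixes a c :: "'a \<Rightarrow> real"
  assumes "finite A" and "p \<in> A"
    and pos: "\<And>j. j \<in> A \<Longrightarrow> 0 < c j"
    and argmin: "\<And>j. j \<in> A \<Longrightarrow> a p / c p \<le> a j / c j"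
    and sum_le: "sum a A \<le> sum c A"
  shows "a p \<le> c p"
proof -
  have "a p * sum c A = (\<Sum>j\<in>A. a p * c j)"
    by (rule sum_distrib_left)
  also have "\<dots> \<le> (\<Sum>j\<in>A. a j * c p)"
  proof (rule sum_mono)
    show "a p * c j \<le> a j * c p" if "j \<in> A" for j
      using argmin[OF that] pos[OF that] pos[OF \<open>p \<in> A\<close>] by (simp add: field_simps)
  qed
  also have "\<dots> = sum a A * c p"
    by (rule sum_distrib_right[symmetric])
  also have "\<dots> \<le> sum c A * c p"
    using sum_le pos[OF \<open>p \<in> A\<close>] by (simp add: mult_right_mono)
  finally have "a p * sum c A \<le> c p * sum c A"
    by (simp add: mult.commute)
  moreover have "0 < sum c A"
    using assms(1,2) pos by (intro sum_pos2[where i = p]) (auto intro: less_imp_le)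
  ultimately show ?thesis
    by simp
qed

lemma lower_bound_of_upper_bounds:
  fixes n c :: "'a \<Rightarrow> real"
  assumes "finite A" and "k \<in> A"
    and "sum n A = sum c A"
    and upper: "\<And>j. j \<in> A \<Longrightarrow> n j \<le> c j + 1"
  shows "c k - (real (card A) - 1) \<le> n k"
proof -
  have "sum n (A - {k}) \<le> (\<Sum>j\<in>A - {k}. c j + 1)"
    using upper by (intro sum_mono) auto
  also have "\<dots> = sum c (A - {k}) + (real (card A) - 1)"
    using assms(1,2) card_gt_0_iff[of A] by (auto simp: sum.distrib of_nat_diff)
  finally show ?thesis
    using assms(1-3) by (simp add: sum.remove)
qed

lemma plays_le_cumw_add_1:
  assumes base: "\<And>k. k < K \<Longrightarrow> real (plays play K k) \<le> cumw w K k + 1"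
    and nonneg: "\<And>s k. K < s \<Longrightarrow> k < K \<Longrightarrow> 0 \<le> w s k"
    and played: "\<And>t. K < t \<Longrightarrow> real (plays play (t - 1) (play t)) \<le> cumw w t (play t)"
    and "K \<le> t" and "k < K"
  shows "real (plays play t k) \<le> cumw w t k + 1"
  using \<open>K \<le> t\<close> \<open>k < K\<close>
proof (induction t arbitrary: k rule: dec_induct)
  case base
  then show ?case
    using assms(1) by simp
next
  case (step t)
  show ?case
  proof (cases "play (Suc t) = k")
    case True
    then show ?thesis
      using played[of "Suc t"] step.hyps by (simp add: plays_Suc)
  next
    case False
    have "real (plays play t k) \<le> cumw w t k + 1"
      using step.IH step.prems .
    then show ?thesis
      using False step.hyps nonneg[of "Suc t" k] step.prems by (simp add: plays_Suc cumw_Suc)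
  qed
qed

theorem lemma3:
  fixes K :: nat and w :: "nat \<Rightarrow> nat \<Rightarrow> real" and play :: "nat \<Rightarrow> nat"
  assumes K_pos: "K \<ge> 1"
    and simplex: "\<And>s. s \<ge> 1 \<Longrightarrow> (\<forall>k<K. 0 \<le> w s k \<and> w s k \<le> 1) \<and> (\<Sum>k<K. w s k) = 1"
    and burnin_w: "\<And>k. k < K \<Longrightarrow> (\<Sum>s=1..K. w s k) = 1"
    and burnin_play: "bij_betw play {1..K} {..<K}"
    and argmin: "\<And>t. t > K \<Longrightarrow> play t < K \<and>
       (\<forall>j<K. real (plays play (t - 1) (play t)) / cumw w t (play t)
               \<le> real (plays play (t - 1) j) / cumw w t j)"
  shows "\<forall>t\<ge>K. \<forall>k<K. cumw w t k - (real K - 1) \<le> real (plays play t k)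
                      \<and> real (plays play t k) \<le> cumw w t k + 1"
proof -
  have play_lt: "play s < K" if "1 \<le> s" for s
    using bij_betwE[OF burnin_play] argmin[of s] that by (cases "s \<le> K") auto
  have nonneg: "0 \<le> w s k" if "K < s" "k < K" for s k
    using simplex[of s] that K_pos by simp
  have sum_plays_eq: "(\<Sum>k<K. real (plays play t k)) = real t" for t
    by (rule sum_plays) (simp add: play_lt)
  have sum_cumw_eq: "(\<Sum>k<K. cumw w t k) = real t" for t
    by (rule sum_cumw) (simp add: simplex)
  have cumw_ge_1: "1 \<le> cumw w t k" if "K \<le> t" "k < K" for t k
    using cumw_mono[OF that(1), of w k] nonneg burnin_w[OF that(2)] that(2)
    by (simp add: cumw_def)
  have played: "real (plays play (t - 1) (play t)) \<le> cumw w t (play t)" if "K < t" for t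
  proof (rule argmin_ratio_le[where A = "{..<K}"])
    show "play t \<in> {..<K}"
      using argmin[OF \<open>K < t\<close>] by simp
    show "0 < cumw w t j" if "j \<in> {..<K}" for j
      using cumw_ge_1[of t j] that \<open>K < t\<close> by simp
    show "real (plays play (t - 1) (play t)) / cumw w t (play t)
        \<le> real (plays play (t - 1) j) / cumw w t j" if "j \<in> {..<K}" for j
      using argmin[OF \<open>K < t\<close>] that by blast
    show "(\<Sum>j<K. real (plays play (t - 1) j)) \<le> (\<Sum>j<K. cumw w t j)"
      by (simp add: sum_plays_eq sum_cumw_eq)
  qed simp
  have upper: "real (plays play t k) \<le> cumw w t k + 1" if "K \<le> t" "k < K" for t k
  proof (rule plays_le_cumw_add_1[OF _ nonneg played that])
    show "real (plays play K j) \<le> cumw w K j + 1" if "j < K" for j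
      using plays_eq_1_if_bij_betw[OF burnin_play that] cumw_ge_1[of K j] that by simp
  qed
  have lower: "cumw w t k - (real K - 1) \<le> real (plays play t k)" if "K \<le> t" "k < K" for t k
    using lower_bound_of_upper_bounds[of "{..<K}" k "\<lambda>j. real (plays play t j)" "cumw w t"]
      sum_plays_eq sum_cumw_eq upper[OF that(1)] that(2) by simp
  show ?thesis
    using lower upper by blast
qed

end
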